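(* Let $\Lambda$ be a split-by-nilpotent extension of a finite dimensional algebra $A$. Then the triangle functor $-\otimes_A\Lambda:K^b(\mathrm{proj}\,A)\to K^b(\mathrm{proj}\,\Lambda)$ sends indecomposable objects to indecomposable objects.
   Context: $\Lambda$ is a split-by-nilpotent extension of $A$: there is a surjective algebra homomorphism $\pi:\Lambda\to A$ with nilpotent kernel and an algebra homomorphism $\iota:A\to\Lambda$ with $\pi\circ\iota=\mathrm{id}_A$; $\Lambda$ is a left $A$-module via $\iota$ and $A$ a left $\Lambda$-module via $\pi$. $K^b(\mathrm{proj}\,B)$ is the bounded homotopy category of finitely generated projective right $B$-modules. *)

theory Defs
  imports Main "Jordan_Normal_Form.Matrix"
begin

definition fd_algebra :: "('k::field \<Rightarrow> 'a::ring_1 \<Rightarrow> 'a) \<Rightarrow> bool" where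
  "fd_algebra s \<longleftrightarrow> vector_space s
     \<and> (\<forall>c x y. s c (x * y) = s c x * y \<and> s c (x * y) = x * s c y)
     \<and> (\<exists>B. finite B \<and> module.span s B = UNIV)"

definition alg_hom :: "('k::field \<Rightarrow> 'a::ring_1 \<Rightarrow> 'a) \<Rightarrow> ('k \<Rightarrow> 'b::ring_1 \<Rightarrow> 'b)
    \<Rightarrow> ('a \<Rightarrow> 'b) \<Rightarrow> bool" where
  "alg_hom sa sb f \<longleftrightarrow> f 1 = 1 \<and> (\<forall>x y. f (x + y) = f x + f y) \<and>
     (\<forall>x y. f (x * y) = f x * f y) \<and> (\<forall>c x. f (sa c x) = sb c (f x))"

definition nilpotent_ideal :: "'b::ring_1 set \<Rightarrow> bool" where
  "nilpotent_ideal I \<longleftrightarrow> (\<exists>n>0. \<forall>xs. length xs = n \<longrightarrow> set xs \<subseteq> I \<longrightarrow> prod_list xs = 0)"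

definition split_by_nilpotent ::
  "('k::field \<Rightarrow> 'a::ring_1 \<Rightarrow> 'a) \<Rightarrow> ('k \<Rightarrow> 'b::ring_1 \<Rightarrow> 'b)
    \<Rightarrow> ('b \<Rightarrow> 'a) \<Rightarrow> ('a \<Rightarrow> 'b) \<Rightarrow> bool" where
  "split_by_nilpotent sA sL \<pi> \<iota> \<longleftrightarrow>
     alg_hom sL sA \<pi> \<and> surj \<pi> \<and> alg_hom sA sL \<iota> \<and> (\<forall>a. \<pi> (\<iota> a) = a)
     \<and> nilpotent_ideal {x. \<pi> x = 0}"

text \<open>Model: a f.g. projective right R-module is (up to isomorphism) e R^n (column vectors,
  R acting on the right), e an idempotent n x n matrix. Homomorphisms e R^n \<rightarrow> f R^m are the
  m x n matrices g with g = f g e, acting by left multiplication.\<close>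

record 'a cpx =
  rk :: "int \<Rightarrow> nat"
  idm :: "int \<Rightarrow> 'a mat"
  dif :: "int \<Rightarrow> 'a mat"

definition is_hom :: "'a::ring_1 mat \<Rightarrow> 'a mat \<Rightarrow> 'a mat \<Rightarrow> bool" where
  "is_hom e f g \<longleftrightarrow> g \<in> carrier_mat (dim_row f) (dim_col e) \<and> f * g * e = g"

definition is_cpx :: "'a::ring_1 cpx \<Rightarrow> bool" where
  "is_cpx X \<longleftrightarrow>
     (\<forall>i. idm X i \<in> carrier_mat (rk X i) (rk X i) \<and> idm X i * idm X i = idm X i)
   \<and> (\<forall>i. is_hom (idm X i) (idm X (i+1)) (dif X i))
   \<and> (\<forall>i. dif X (i+1) * dif X i = 0\<^sub>m (rk X (i+2)) (rk X i))
   \<and> (\<exists>N. \<forall>i. \<bar>i\<bar> > N \<longrightarrow> rk X i = 0)"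

definition chain_map :: "'a::ring_1 cpx \<Rightarrow> 'a cpx \<Rightarrow> (int \<Rightarrow> 'a mat) \<Rightarrow> bool" where
  "chain_map X Y f \<longleftrightarrow>
     (\<forall>i. is_hom (idm X i) (idm Y i) (f i))
   \<and> (\<forall>i. f (i+1) * dif X i = dif Y i * f i)"

definition null_homotopic :: "'a::ring_1 cpx \<Rightarrow> 'a cpx \<Rightarrow> (int \<Rightarrow> 'a mat) \<Rightarrow> bool" where
  "null_homotopic X Y f \<longleftrightarrow> (\<exists>h.
     (\<forall>i. is_hom (idm X i) (idm Y (i-1)) (h i))
   \<and> (\<forall>i. f i = dif Y (i-1) * h i + h (i+1) * dif X i))"

definition cpx_id :: "'a::ring_1 cpx \<Rightarrow> int \<Rightarrow> 'a mat" where
  "cpx_id X i = idm X i"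

definition comp_map :: "(int \<Rightarrow> 'a::ring_1 mat) \<Rightarrow> (int \<Rightarrow> 'a mat) \<Rightarrow> int \<Rightarrow> 'a mat" where
  "comp_map g f i = g i * f i"

definition diff_map :: "(int \<Rightarrow> 'a::ring_1 mat) \<Rightarrow> (int \<Rightarrow> 'a mat) \<Rightarrow> int \<Rightarrow> 'a mat" where
  "diff_map f g i = f i - g i"

text \<open>Isomorphism in K^b: homotopy equivalence.\<close>
definition htpy_equiv :: "'a::ring_1 cpx \<Rightarrow> 'a cpx \<Rightarrow> bool" where
  "htpy_equiv X Y \<longleftrightarrow> (\<exists>f g. chain_map X Y f \<and> chain_map Y X g
     \<and> null_homotopic X X (diff_map (comp_map g f) (cpx_id X))
     \<and> null_homotopic Y Y (diff_map (comp_map f g) (cpx_id Y)))"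

text \<open>Zero object of K^b: contractible complex (identity null-homotopic).\<close>
definition contractible :: "'a::ring_1 cpx \<Rightarrow> bool" where
  "contractible X \<longleftrightarrow> null_homotopic X X (cpx_id X)"

definition dsum :: "'a::ring_1 cpx \<Rightarrow> 'a cpx \<Rightarrow> 'a cpx" where
  "dsum X Y = \<lparr> rk = (\<lambda>i. rk X i + rk Y i),
     idm = (\<lambda>i. four_block_mat (idm X i) (0\<^sub>m (rk X i) (rk Y i)) (0\<^sub>m (rk Y i) (rk X i)) (idm Y i)),
     dif = (\<lambda>i. four_block_mat (dif X i) (0\<^sub>m (rk X (i+1)) (rk Y i))
                               (0\<^sub>m (rk Y (i+1)) (rk X i)) (dif Y i)) \<rparr>"

definition indecomposable :: "'a::ring_1 cpx \<Rightarrow> bool" where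
  "indecomposable X \<longleftrightarrow> \<not> contractible X \<and>
     (\<forall>Y Z. is_cpx Y \<longrightarrow> is_cpx Z \<longrightarrow> htpy_equiv X (dsum Y Z) \<longrightarrow> contractible Y \<or> contractible Z)"

text \<open>The functor - \<otimes>_A \<Lambda> (\<Lambda> a left A-module via \<iota>): e A^n \<otimes>_A \<Lambda> = \<iota>(e) \<Lambda>^n, and a
  matrix g of a homomorphism is sent to \<iota>(g), entrywise.\<close>
definition tensor_cpx :: "('a \<Rightarrow> 'b) \<Rightarrow> 'a cpx \<Rightarrow> 'b cpx" where
  "tensor_cpx \<iota> X = \<lparr> rk = rk X, idm = (\<lambda>i. map_mat \<iota> (idm X i)), dif = (\<lambda>i. map_mat \<iota> (dif X i)) \<rparr>"

end

theory Submission
  imports Defs "Jordan_Normal_Form.Ring_Hom_Matrix"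
begin

text \<open>
  Base change along a ring homomorphism (entrywise on the matrices of a complex) preserves
  complexes, null-homotopies, homotopy equivalences and direct sums, and base change along
  \<open>\<pi>\<close> undoes base change along \<open>\<iota>\<close>. Hence \<open>X \<otimes>\<^sub>A \<Lambda>\<close> is not contractible, and
  a decomposition \<open>X \<otimes>\<^sub>A \<Lambda> \<cong> Y \<oplus> Z\<close> reduces along \<open>\<pi>\<close> to \<open>X \<cong> \<pi>Y \<oplus> \<pi>Z\<close>, so that
  \<open>\<pi>Y\<close> or \<open>\<pi>Z\<close> is contractible.

  It remains to see that reduction modulo the nilpotent ideal \<open>ker \<pi>\<close> reflects
  contractibility. Lifting a contracting homotopy of \<open>\<pi>Y\<close> entrywise gives a homotopy \<open>h\<close>
  on \<open>Y\<close> with \<open>dh + hd \<equiv> id\<close> modulo \<open>ker \<pi>\<close>. So the identity is homotopic to the chain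
  endomorphism \<open>n = id - (dh + hd)\<close>, whose entries lie in \<open>ker \<pi>\<close>; then it is homotopic to
  every power of \<open>n\<close>, and \<open>n\<^sup>N = 0\<close> for large \<open>N\<close>.
\<close>

definition idempotent_mat :: "nat \<Rightarrow> 'a::ring_1 mat \<Rightarrow> bool" where
  "idempotent_mat n e \<longleftrightarrow> e \<in> carrier_mat n n \<and> e * e = e"

lemma is_hom_iff:
  assumes e: "idempotent_mat n e" and f: "idempotent_mat m f"
  shows "is_hom e f g \<longleftrightarrow> g \<in> carrier_mat m n \<and> f * g = g \<and> g * e = g"
proof
  assume hom: "is_hom e f g"
  have ec: "e \<in> carrier_mat n n" and ee: "e * e = e" using e unfolding idempotent_mat_def by auto
  have fc: "f \<in> carrier_mat m m" and ff: "f * f = f" using f unfolding idempotent_mat_def by auto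
  have gc: "g \<in> carrier_mat m n" and fge: "f * g * e = g"
    using hom ec fc unfolding is_hom_def by auto
  have "f * g = (f * f) * g * e"
    using fge ec fc gc by (metis assoc_mult_mat mult_carrier_mat)
  moreover have "g * e = f * g * (e * e)"
    using fge ec fc gc by (metis assoc_mult_mat mult_carrier_mat)
  ultimately show "g \<in> carrier_mat m n \<and> f * g = g \<and> g * e = g"
    using gc fge ee ff by simp
next
  assume "g \<in> carrier_mat m n \<and> f * g = g \<and> g * e = g"
  then show "is_hom e f g"
    using e f unfolding is_hom_def idempotent_mat_def by auto
qed

lemma is_hom_idempotent: "idempotent_mat n e \<Longrightarrow> is_hom e e e"
  by (simp add: is_hom_iff) (simp add: idempotent_mat_def)

lemma is_hom_add:
  assumes e: "idempotent_mat n e" and f: "idempotent_mat m f"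
    and "is_hom e f a" "is_hom e f b"
  shows "is_hom e f (a + b)"
proof -
  have "a \<in> carrier_mat m n" "f * a = a" "a * e = a" "b \<in> carrier_mat m n" "f * b = b" "b * e = b"
    using assms by (simp_all add: is_hom_iff)
  moreover have "f \<in> carrier_mat m m" "e \<in> carrier_mat n n"
    using e f unfolding idempotent_mat_def by auto
  ultimately show ?thesis
    using e f by (simp add: is_hom_iff mult_add_distrib_mat add_mult_distrib_mat)
qed

lemma is_hom_diff:
  assumes e: "idempotent_mat n e" and f: "idempotent_mat m f"
    and "is_hom e f a" "is_hom e f b"
  shows "is_hom e f (a - b)"
proof -
  have "a \<in> carrier_mat m n" "f * a = a" "a * e = a" "b \<in> carrier_mat m n" "f * b = b" "b * e = b"
    using assms by (simp_all add: is_hom_iff)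
  moreover have "f \<in> carrier_mat m m" "e \<in> carrier_mat n n"
    using e f unfolding idempotent_mat_def by auto
  ultimately show ?thesis
    using e f by (simp add: is_hom_iff minus_carrier_mat mult_minus_distrib_mat minus_mult_distrib_mat)
qed

lemma is_hom_mult:
  assumes e: "idempotent_mat n e" and f: "idempotent_mat m f" and g: "idempotent_mat k g"
    and "is_hom f g a" "is_hom e f b"
  shows "is_hom e g (a * b)"
proof -
  have "a \<in> carrier_mat k m" "g * a = a" "b \<in> carrier_mat m n" "b * e = b"
    using assms by (simp_all add: is_hom_iff)
  moreover have "g \<in> carrier_mat k k" "e \<in> carrier_mat n n"
    using e g unfolding idempotent_mat_def by auto
  ultimately have "g * (a * b) = a * b" "a * b * e = a * b"
    by (simp flip: assoc_mult_mat, simp)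
  then show ?thesis
    using e g \<open>a \<in> carrier_mat k m\<close> \<open>b \<in> carrier_mat m n\<close> by (simp add: is_hom_iff)
qed

lemma is_hom_zero:
  assumes "idempotent_mat n e" "idempotent_mat m f"
  shows "is_hom e f (0\<^sub>m m n)"
  using assms by (auto simp: is_hom_iff idempotent_mat_def)

lemma is_hom_sandwich:
  assumes e: "idempotent_mat n e" and f: "idempotent_mat m f" and g: "g \<in> carrier_mat m n"
  shows "is_hom e f (f * g * e)"
proof -
  have ec: "e \<in> carrier_mat n n" and ee: "e * e = e" and fc: "f \<in> carrier_mat m m" and ff: "f * f = f"
    using e f unfolding idempotent_mat_def by auto
  have "f * (f * g * e) = (f * f) * (g * e)"
    unfolding assoc_mult_mat[OF fc g ec] using assoc_mult_mat[OF fc fc mult_carrier_mat[OF g ec]] by simp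
  moreover have "f * g * e * e = f * g * (e * e)"
    using assoc_mult_mat[OF mult_carrier_mat[OF fc g] ec ec] .
  ultimately show ?thesis
    unfolding is_hom_iff[OF e f] using ec fc g ee ff assoc_mult_mat[OF fc g ec] by simp
qed

lemma is_cpx_idempotent: "is_cpx X \<Longrightarrow> idempotent_mat (rk X i) (idm X i)"
  unfolding is_cpx_def idempotent_mat_def by blast

lemma is_cpx_dif_hom: "is_cpx X \<Longrightarrow> is_hom (idm X i) (idm X (i+1)) (dif X i)"
  unfolding is_cpx_def by blast

lemma is_cpx_dif_dif: "is_cpx X \<Longrightarrow> dif X (i+1) * dif X i = 0\<^sub>m (rk X (i+1+1)) (rk X i)"
  unfolding is_cpx_def by (simp add: add.assoc)

lemma is_cpx_hom_iff:
  assumes "is_cpx X" "is_cpx Y"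
  shows "is_hom (idm X i) (idm Y j) g \<longleftrightarrow>
    g \<in> carrier_mat (rk Y j) (rk X i) \<and> idm Y j * g = g \<and> g * idm X i = g"
  using assms by (intro is_hom_iff is_cpx_idempotent)

lemma is_cpx_hom_carrier:
  "is_cpx X \<Longrightarrow> is_cpx Y \<Longrightarrow> is_hom (idm X i) (idm Y j) g \<Longrightarrow> g \<in> carrier_mat (rk Y j) (rk X i)"
  using is_cpx_hom_iff by blast

lemma is_cpx_idm_carrier: "is_cpx X \<Longrightarrow> idm X i \<in> carrier_mat (rk X i) (rk X i)"
  using is_cpx_idempotent unfolding idempotent_mat_def by blast

lemma is_cpx_dif_carrier: "is_cpx X \<Longrightarrow> dif X i \<in> carrier_mat (rk X (i+1)) (rk X i)"
  using is_cpx_dif_hom is_cpx_hom_iff by blast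

lemma mult_block_diag_mat:
  assumes "A \<in> carrier_mat nr1 n1" "D \<in> carrier_mat nr2 n2" "A' \<in> carrier_mat n1 nc1" "D' \<in> carrier_mat n2 nc2"
  shows "four_block_mat A (0\<^sub>m nr1 n2) (0\<^sub>m nr2 n1) D * four_block_mat A' (0\<^sub>m n1 nc2) (0\<^sub>m n2 nc1) D'
    = four_block_mat (A * A') (0\<^sub>m nr1 nc2) (0\<^sub>m nr2 nc1) (D * D')"
  using assms by (subst mult_four_block_mat[OF assms(1) _ _ assms(2) assms(3) _ _ assms(4)]) auto

lemma is_cpx_dsum:
  assumes Y: "is_cpx Y" and Z: "is_cpx Z"
  shows "is_cpx (dsum Y Z)"
proof -
  note eY = is_cpx_idm_carrier[OF Y] and eZ = is_cpx_idm_carrier[OF Z]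
    and dY = is_cpx_dif_carrier[OF Y] and dZ = is_cpx_dif_carrier[OF Z]
  have idem: "idempotent_mat (rk (dsum Y Z) i) (idm (dsum Y Z) i)" for i
    using is_cpx_idempotent[OF Y, of i] is_cpx_idempotent[OF Z, of i]
    unfolding idempotent_mat_def dsum_def by (simp add: mult_block_diag_mat)
  have "is_hom (idm (dsum Y Z) i) (idm (dsum Y Z) (i+1)) (dif (dsum Y Z) i)" for i
    unfolding is_hom_iff[OF idem idem]
    using is_cpx_dif_hom[OF Y, of i] is_cpx_dif_hom[OF Z, of i] eY eZ dY[of i] dZ[of i]
    by (simp add: dsum_def is_cpx_hom_iff[OF Y Y] is_cpx_hom_iff[OF Z Z] mult_block_diag_mat)
  moreover have "dif (dsum Y Z) (i+1) * dif (dsum Y Z) i = 0\<^sub>m (rk (dsum Y Z) (i+2)) (rk (dsum Y Z) i)" for i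
    using is_cpx_dif_dif[OF Y, of i] is_cpx_dif_dif[OF Z, of i] dY[of i] dZ[of i] dY[of "i+1"] dZ[of "i+1"]
    by (simp add: dsum_def mult_block_diag_mat add.assoc)
  moreover have "\<exists>N. \<forall>i. \<bar>i\<bar> > N \<longrightarrow> rk (dsum Y Z) i = 0"
  proof -
    obtain NY NZ where "\<forall>i. \<bar>i\<bar> > NY \<longrightarrow> rk Y i = 0" "\<forall>i. \<bar>i\<bar> > NZ \<longrightarrow> rk Z i = 0"
      using Y Z unfolding is_cpx_def by blast
    then show ?thesis
      by (intro exI[of _ "max NY NZ"]) (simp add: dsum_def)
  qed
  ultimately show ?thesis
    using idem unfolding is_cpx_def idempotent_mat_def by blast
qed

lemma chain_map_carrier:
  "is_cpx X \<Longrightarrow> is_cpx Y \<Longrightarrow> chain_map X Y f \<Longrightarrow> f i \<in> carrier_mat (rk Y i) (rk X i)"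
  unfolding chain_map_def using is_cpx_hom_iff by blast

lemma chain_map_id: "is_cpx X \<Longrightarrow> chain_map X X (cpx_id X)"
  unfolding chain_map_def cpx_id_def
  using is_hom_idempotent[OF is_cpx_idempotent] is_cpx_dif_hom is_cpx_hom_iff by metis

lemma chain_map_comp:
  assumes X: "is_cpx X" and Y: "is_cpx Y" and Z: "is_cpx Z"
    and g: "chain_map Y Z g" and f: "chain_map X Y f"
  shows "chain_map X Z (comp_map g f)"
  unfolding chain_map_def comp_map_def
proof (intro allI conjI)
  fix i
  show "is_hom (idm X i) (idm Z i) (g i * f i)"
    using g f by (intro is_hom_mult[OF is_cpx_idempotent[OF X] is_cpx_idempotent[OF Y]
        is_cpx_idempotent[OF Z]]) (auto simp: chain_map_def)
  have gc: "g j \<in> carrier_mat (rk Z j) (rk Y j)" and fc: "f j \<in> carrier_mat (rk Y j) (rk X j)" for j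
    using chain_map_carrier X Y Z f g by blast+
  note dX = is_cpx_dif_carrier[OF X, of i] and dY = is_cpx_dif_carrier[OF Y, of i]
    and dZ = is_cpx_dif_carrier[OF Z, of i]
  have "g (i+1) * f (i+1) * dif X i = g (i+1) * (f (i+1) * dif X i)"
    using gc[of "i+1"] fc[of "i+1"] dX by simp
  also have "\<dots> = (g (i+1) * dif Y i) * f i"
    using f gc[of "i+1"] fc[of i] dY unfolding chain_map_def by simp
  also have "\<dots> = dif Z i * (g i * f i)"
    using g gc[of i] fc[of i] dZ unfolding chain_map_def by simp
  finally show "g (i+1) * f (i+1) * dif X i = dif Z i * (g i * f i)" .
qed

lemma chain_map_diff:
  assumes X: "is_cpx X" and Y: "is_cpx Y" and f: "chain_map X Y f" and g: "chain_map X Y g"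
  shows "chain_map X Y (diff_map f g)"
  unfolding chain_map_def diff_map_def
proof (intro allI conjI)
  fix i
  show "is_hom (idm X i) (idm Y i) (f i - g i)"
    using f g by (intro is_hom_diff[OF is_cpx_idempotent[OF X] is_cpx_idempotent[OF Y]])
      (auto simp: chain_map_def)
  have gc: "g j \<in> carrier_mat (rk Y j) (rk X j)" and fc: "f j \<in> carrier_mat (rk Y j) (rk X j)" for j
    using chain_map_carrier X Y f g by blast+
  have "(f (i+1) - g (i+1)) * dif X i = f (i+1) * dif X i - g (i+1) * dif X i"
    using fc gc is_cpx_dif_carrier[OF X] by (intro minus_mult_distrib_mat)
  also have "\<dots> = dif Y i * (f i - g i)"
    using f g fc[of i] gc[of i] is_cpx_dif_carrier[OF Y, of i] unfolding chain_map_def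
    by (simp add: mult_minus_distrib_mat)
  finally show "(f (i+1) - g (i+1)) * dif X i = dif Y i * (f i - g i)" .
qed

lemma null_homotopic_hom:
  assumes X: "is_cpx X" and Y: "is_cpx Y" and f: "null_homotopic X Y f"
  shows "is_hom (idm X i) (idm Y i) (f i)"
proof -
  obtain h where h: "\<And>i. is_hom (idm X i) (idm Y (i-1)) (h i)"
    and fh: "\<And>i. f i = dif Y (i-1) * h i + h (i+1) * dif X i"
    using f unfolding null_homotopic_def by blast
  note eX = is_cpx_idempotent[OF X] and eY = is_cpx_idempotent[OF Y]
  have "is_hom (idm X i) (idm Y i) (dif Y (i-1) * h i)"
    using is_hom_mult[OF eX eY eY is_cpx_dif_hom[OF Y, of "i-1"] h] by simp
  moreover have "is_hom (idm X i) (idm Y i) (h (i+1) * dif X i)"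
    using is_hom_mult[OF eX eX eY _ is_cpx_dif_hom[OF X]] h[of "i+1"] by simp
  ultimately show ?thesis
    unfolding fh[of i] by (rule is_hom_add[OF eX eY])
qed

lemma null_homotopic_chain_map:
  assumes X: "is_cpx X" and Y: "is_cpx Y" and f: "null_homotopic X Y f"
  shows "chain_map X Y f"
  unfolding chain_map_def
proof (intro allI conjI)
  fix i
  show "is_hom (idm X i) (idm Y i) (f i)"
    by (rule null_homotopic_hom[OF X Y f])
  obtain h where h: "\<And>i. is_hom (idm X i) (idm Y (i-1)) (h i)"
    and fh: "\<And>i. f i = dif Y (i-1) * h i + h (i+1) * dif X i"
    using f unfolding null_homotopic_def by blast
  note hc = is_cpx_hom_carrier[OF X Y h] and dX = is_cpx_dif_carrier[OF X]
    and dY = is_cpx_dif_carrier[OF Y]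
  define j where "j = i + 1"
  have fj: "f j = dif Y i * h j + h (j+1) * dif X j" and fi: "f i = dif Y (i-1) * h i + h j * dif X i"
    using fh[of j] fh[of i] unfolding j_def by simp_all
  have hi: "h i \<in> carrier_mat (rk Y (i-1)) (rk X i)" and hj: "h j \<in> carrier_mat (rk Y i) (rk X j)"
    using hc[of i] hc[of j] by (simp_all add: j_def)
  have hj1: "h (j+1) \<in> carrier_mat (rk Y j) (rk X (j+1))"
    using hc[of "j+1"] by simp
  have dXi: "dif X i \<in> carrier_mat (rk X j) (rk X i)" and dXj: "dif X j \<in> carrier_mat (rk X (j+1)) (rk X j)"
    and dYi: "dif Y i \<in> carrier_mat (rk Y j) (rk Y i)" and dYi': "dif Y (i-1) \<in> carrier_mat (rk Y i) (rk Y (i-1))"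
    using dX[of i] dX[of j] dY[of i] dY[of "i-1"] unfolding j_def by simp_all
  have ddX: "dif X j * dif X i = 0\<^sub>m (rk X (j+1)) (rk X i)"
    and ddY: "dif Y i * dif Y (i-1) = 0\<^sub>m (rk Y j) (rk Y (i-1))"
    using is_cpx_dif_dif[OF X, of i] is_cpx_dif_dif[OF Y, of "i-1"] unfolding j_def by simp_all
  have "f j * dif X i = dif Y i * h j * dif X i + h (j+1) * (dif X j * dif X i)"
    unfolding fj add_mult_distrib_mat[OF mult_carrier_mat[OF dYi hj] mult_carrier_mat[OF hj1 dXj] dXi]
    using hj hj1 dXi dXj dYi by simp
  also have "\<dots> = dif Y i * h j * dif X i"
    unfolding ddX using hj hj1 dXi dYi by simp
  also have "\<dots> = (dif Y i * dif Y (i-1)) * h i + dif Y i * h j * dif X i"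
    unfolding ddY using hi hj dXi dYi by simp
  also have "\<dots> = dif Y i * f i"
    unfolding fi mult_add_distrib_mat[OF dYi mult_carrier_mat[OF dYi' hi] mult_carrier_mat[OF hj dXi]]
    using hi hj dXi dYi dYi' by simp
  finally show "f (i+1) * dif X i = dif Y i * f i"
    unfolding j_def .
qed

lemma null_homotopic_zero:
  assumes X: "is_cpx X" and Y: "is_cpx Y"
  shows "null_homotopic X Y (\<lambda>i. 0\<^sub>m (rk Y i) (rk X i))"
  unfolding null_homotopic_def
proof (intro exI[of _ "\<lambda>i. 0\<^sub>m (rk Y (i-1)) (rk X i)"] conjI allI)
  fix i
  show "is_hom (idm X i) (idm Y (i-1)) (0\<^sub>m (rk Y (i-1)) (rk X i))"
    using X Y by (intro is_hom_zero is_cpx_idempotent)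
  show "0\<^sub>m (rk Y i) (rk X i) = dif Y (i-1) * 0\<^sub>m (rk Y (i-1)) (rk X i) + 0\<^sub>m (rk Y (i+1-1)) (rk X (i+1)) * dif X i"
    using is_cpx_dif_carrier[OF X, of i] is_cpx_dif_carrier[OF Y, of "i-1"] by simp
qed

lemma null_homotopic_add:
  assumes X: "is_cpx X" and Y: "is_cpx Y"
    and f: "null_homotopic X Y f" and g: "null_homotopic X Y g"
  shows "null_homotopic X Y (\<lambda>i. f i + g i)"
proof -
  obtain h where h: "\<And>i. is_hom (idm X i) (idm Y (i-1)) (h i)"
    and fh: "\<And>i. f i = dif Y (i-1) * h i + h (i+1) * dif X i"
    using f unfolding null_homotopic_def by blast
  obtain k where k: "\<And>i. is_hom (idm X i) (idm Y (i-1)) (k i)"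
    and gk: "\<And>i. g i = dif Y (i-1) * k i + k (i+1) * dif X i"
    using g unfolding null_homotopic_def by blast
  show ?thesis
    unfolding null_homotopic_def
  proof (intro exI[of _ "\<lambda>i. h i + k i"] conjI allI)
    fix i
    show "is_hom (idm X i) (idm Y (i-1)) (h i + k i)"
      using h k by (rule is_hom_add[OF is_cpx_idempotent[OF X] is_cpx_idempotent[OF Y]])
    have hi: "h i \<in> carrier_mat (rk Y (i-1)) (rk X i)" and ki: "k i \<in> carrier_mat (rk Y (i-1)) (rk X i)"
      and hi1: "h (i+1) \<in> carrier_mat (rk Y i) (rk X (i+1))" and ki1: "k (i+1) \<in> carrier_mat (rk Y i) (rk X (i+1))"
      using is_cpx_hom_carrier[OF X Y h[of i]] is_cpx_hom_carrier[OF X Y k[of i]]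
        is_cpx_hom_carrier[OF X Y h[of "i+1"]] is_cpx_hom_carrier[OF X Y k[of "i+1"]] by simp_all
    have dX: "dif X i \<in> carrier_mat (rk X (i+1)) (rk X i)"
      and dY: "dif Y (i-1) \<in> carrier_mat (rk Y i) (rk Y (i-1))"
      using is_cpx_dif_carrier[OF X, of i] is_cpx_dif_carrier[OF Y, of "i-1"] by simp_all
    show "f i + g i = dif Y (i-1) * (h i + k i) + (h (i+1) + k (i+1)) * dif X i"
      unfolding fh gk mult_add_distrib_mat[OF dY hi ki] add_mult_distrib_mat[OF hi1 ki1 dX]
      using hi ki hi1 ki1 dX dY by (intro eq_matI) auto
  qed
qed

lemma null_homotopic_comp_left:
  assumes X: "is_cpx X" and Y: "is_cpx Y" and Z: "is_cpx Z"
    and c: "chain_map Y Z c" and f: "null_homotopic X Y f"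
  shows "null_homotopic X Z (comp_map c f)"
proof -
  obtain h where h: "\<And>i. is_hom (idm X i) (idm Y (i-1)) (h i)"
    and fh: "\<And>i. f i = dif Y (i-1) * h i + h (i+1) * dif X i"
    using f unfolding null_homotopic_def by blast
  show ?thesis
    unfolding null_homotopic_def comp_map_def
  proof (intro exI[of _ "\<lambda>i. c (i-1) * h i"] conjI allI)
    fix i
    show "is_hom (idm X i) (idm Z (i-1)) (c (i-1) * h i)"
      using c h X Y Z unfolding chain_map_def by (blast intro: is_hom_mult is_cpx_idempotent)
    have hi: "h i \<in> carrier_mat (rk Y (i-1)) (rk X i)"
      and hi1: "h (i+1) \<in> carrier_mat (rk Y i) (rk X (i+1))"
      using is_cpx_hom_carrier[OF X Y h[of i]] is_cpx_hom_carrier[OF X Y h[of "i+1"]] by simp_all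
    have ci: "c i \<in> carrier_mat (rk Z i) (rk Y i)" and ci': "c (i-1) \<in> carrier_mat (rk Z (i-1)) (rk Y (i-1))"
      using chain_map_carrier[OF Y Z c] by blast+
    have dX: "dif X i \<in> carrier_mat (rk X (i+1)) (rk X i)"
      and dY: "dif Y (i-1) \<in> carrier_mat (rk Y i) (rk Y (i-1))"
      and dZ: "dif Z (i-1) \<in> carrier_mat (rk Z i) (rk Z (i-1))"
      using is_cpx_dif_carrier[OF X, of i] is_cpx_dif_carrier[OF Y, of "i-1"]
        is_cpx_dif_carrier[OF Z, of "i-1"] by simp_all
    have cd: "c i * dif Y (i-1) = dif Z (i-1) * c (i-1)"
      using c unfolding chain_map_def by (metis diff_add_cancel)
    have "c i * f i = (c i * dif Y (i-1)) * h i + c i * h (i+1) * dif X i"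
      unfolding fh[of i] mult_add_distrib_mat[OF ci mult_carrier_mat[OF dY hi] mult_carrier_mat[OF hi1 dX]]
      using ci dY hi hi1 dX by simp
    then show "c i * f i = dif Z (i-1) * (c (i-1) * h i) + c (i+1-1) * h (i+1) * dif X i"
      unfolding cd using dZ ci' hi by simp
  qed
qed

primrec endo_pow :: "'a::ring_1 cpx \<Rightarrow> (int \<Rightarrow> 'a mat) \<Rightarrow> nat \<Rightarrow> int \<Rightarrow> 'a mat" where
  "endo_pow X f 0 = cpx_id X"
| "endo_pow X f (Suc k) = comp_map (endo_pow X f k) f"

lemma chain_map_endo_pow:
  assumes "is_cpx X" "chain_map X X f"
  shows "chain_map X X (endo_pow X f k)"
  by (induction k) (simp_all add: chain_map_id[OF assms(1)] chain_map_comp[OF assms(1,1,1) _ assms(2)])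

lemma null_homotopic_id_minus_endo_pow:
  assumes X: "is_cpx X" and f: "chain_map X X f"
    and u: "null_homotopic X X (diff_map (cpx_id X) f)"
  shows "null_homotopic X X (diff_map (cpx_id X) (endo_pow X f k))"
proof (induction k)
  case 0
  have "diff_map (cpx_id X) (endo_pow X f 0) = (\<lambda>i. 0\<^sub>m (rk X i) (rk X i))"
    using is_cpx_idm_carrier[OF X] by (auto simp: diff_map_def cpx_id_def)
  then show ?case
    using null_homotopic_zero[OF X X] by simp
next
  case (Suc k)
  let ?p = "endo_pow X f k"
  have "diff_map (cpx_id X) (endo_pow X f (Suc k))
      = (\<lambda>i. diff_map (cpx_id X) ?p i + comp_map ?p (diff_map (cpx_id X) f) i)"
  proof
    fix i
    have e: "idm X i \<in> carrier_mat (rk X i) (rk X i)" by (rule is_cpx_idm_carrier[OF X])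
    have p: "?p i \<in> carrier_mat (rk X i) (rk X i)" "?p i * idm X i = ?p i"
      using chain_map_endo_pow[OF X f] X is_cpx_hom_iff unfolding chain_map_def by blast+
    have fi: "f i \<in> carrier_mat (rk X i) (rk X i)" by (rule chain_map_carrier[OF X X f])
    show "diff_map (cpx_id X) (endo_pow X f (Suc k)) i
        = diff_map (cpx_id X) ?p i + comp_map ?p (diff_map (cpx_id X) f) i"
      unfolding diff_map_def comp_map_def cpx_id_def endo_pow.simps mult_minus_distrib_mat[OF p(1) e fi] p(2)
      using e p(1) fi by (intro eq_matI) auto
  qed
  then show ?case
    using null_homotopic_add[OF X X Suc null_homotopic_comp_left[OF X X X chain_map_endo_pow[OF X f] u]]
    by simp
qed

section \<open>Nilpotent ideals\<close>

inductive_set ideal_power :: "'a::ring_1 set \<Rightarrow> nat \<Rightarrow> 'a set" for I :: "'a set" and k :: nat where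
  prod_list: "set xs \<subseteq> I \<Longrightarrow> length xs = k \<Longrightarrow> prod_list xs \<in> ideal_power I k"
| zero: "0 \<in> ideal_power I k"
| add: "x \<in> ideal_power I k \<Longrightarrow> y \<in> ideal_power I k \<Longrightarrow> x + y \<in> ideal_power I k"
| uminus: "x \<in> ideal_power I k \<Longrightarrow> - x \<in> ideal_power I k"

lemma ideal_power_one: "x \<in> I \<Longrightarrow> x \<in> ideal_power I 1"
  using ideal_power.prod_list[of "[x]" I 1] by simp

lemma ideal_power_sum: "(\<And>x. x \<in> S \<Longrightarrow> f x \<in> ideal_power I k) \<Longrightarrow> sum f S \<in> ideal_power I k"
  by (induction S rule: infinite_finite_induct) (auto intro: ideal_power.zero ideal_power.add)

lemma ideal_power_mult:
  assumes x: "x \<in> ideal_power I a" and y: "y \<in> ideal_power I b"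
  shows "x * y \<in> ideal_power I (a + b)"
  using x
proof induction
  case (prod_list xs)
  show ?case
    using y
  proof induction
    case (prod_list ys)
    then have "prod_list (xs @ ys) \<in> ideal_power I (a + b)"
      using \<open>set xs \<subseteq> I\<close> \<open>length xs = a\<close> by (intro ideal_power.prod_list) auto
    then show ?case by simp
  qed (auto simp: distrib_left intro: ideal_power.intros)
qed (auto simp: distrib_right intro: ideal_power.intros)

lemma ideal_power_eq_0_if_products_vanish:
  assumes "\<forall>xs. length xs = n \<longrightarrow> set xs \<subseteq> I \<longrightarrow> prod_list xs = 0" "x \<in> ideal_power I n"
  shows "x = 0"
  using assms(2) by induction (use assms(1) in auto)

lemma elements_mat_mult_ideal_power:
  assumes "elements_mat A \<subseteq> ideal_power I a" "elements_mat B \<subseteq> ideal_power I b"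
    and "dim_col A = dim_row B"
  shows "elements_mat (A * B) \<subseteq> ideal_power I (a + b)"
proof
  fix x assume "x \<in> elements_mat (A * B)"
  then obtain i j where ij: "i < dim_row A" "j < dim_col B" and x: "x = (\<Sum>l<dim_row B. A $$ (i,l) * B $$ (l,j))"
    by (auto simp: scalar_prod_def assms(3) atLeast0LessThan)
  show "x \<in> ideal_power I (a + b)"
    unfolding x using assms ij by (intro ideal_power_sum ideal_power_mult) auto
qed

lemma elements_endo_pow_ideal_power:
  assumes X: "is_cpx X" and f: "chain_map X X f" and fI: "\<And>i. elements_mat (f i) \<subseteq> I"
  shows "elements_mat (endo_pow X f (Suc k) i) \<subseteq> ideal_power I (Suc k)"
proof (induction k)
  case 0
  have "idm X i * f i = f i"
    using f is_cpx_hom_iff[OF X X] unfolding chain_map_def by blast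
  then have "endo_pow X f (Suc 0) i = f i"
    by (simp add: comp_map_def cpx_id_def)
  moreover have "elements_mat (f i) \<subseteq> ideal_power I (Suc 0)"
    using fI[of i] ideal_power_one[unfolded One_nat_def] by blast
  ultimately show ?case by simp
next
  case (Suc k)
  have "elements_mat (endo_pow X f (Suc k) i * f i) \<subseteq> ideal_power I (Suc k + 1)"
  proof (rule elements_mat_mult_ideal_power)
    show "elements_mat (f i) \<subseteq> ideal_power I 1"
      using fI[of i] ideal_power_one by blast
    show "dim_col (endo_pow X f (Suc k) i) = dim_row (f i)"
      using chain_map_carrier[OF X X chain_map_endo_pow[OF X f]] chain_map_carrier[OF X X f]
      by (metis carrier_matD)
  qed (rule Suc)
  then show ?case by (simp add: comp_map_def)
qed

lemma contractible_if_id_homotopic_to_nilpotent: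
  assumes X: "is_cpx X" and I: "nilpotent_ideal I"
    and f: "chain_map X X f" and fI: "\<And>i. elements_mat (f i) \<subseteq> I"
    and u: "null_homotopic X X (diff_map (cpx_id X) f)"
  shows "contractible X"
proof -
  obtain n where "n > 0" and n: "\<forall>xs. length xs = n \<longrightarrow> set xs \<subseteq> I \<longrightarrow> prod_list xs = 0"
    using I unfolding nilpotent_ideal_def by blast
  have fn_zero: "endo_pow X f n i = 0\<^sub>m (rk X i) (rk X i)" for i
  proof -
    have c: "endo_pow X f n i \<in> carrier_mat (rk X i) (rk X i)"
      using chain_map_carrier[OF X X chain_map_endo_pow[OF X f]] .
    have "elements_mat (endo_pow X f n i) \<subseteq> ideal_power I n"
      using elements_endo_pow_ideal_power[OF X f fI, of "n-1"] \<open>n > 0\<close> by simp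
    then have "endo_pow X f n i $$ (j, l) = 0" if "j < rk X i" "l < rk X i" for j l
      using ideal_power_eq_0_if_products_vanish[OF n] c that by blast
    then show ?thesis
      using c by (intro eq_matI) auto
  qed
  have "diff_map (cpx_id X) (endo_pow X f n) = cpx_id X"
  proof
    fix i
    show "diff_map (cpx_id X) (endo_pow X f n) i = cpx_id X i"
      unfolding diff_map_def cpx_id_def fn_zero using is_cpx_idm_carrier[OF X, of i]
      by (intro eq_matI) auto
  qed
  then show ?thesis
    using null_homotopic_id_minus_endo_pow[OF X f u, of n] unfolding contractible_def by simp
qed

section \<open>Base change along a ring homomorphism\<close>

lemma tensor_cpx_simps [simp]:
  "rk (tensor_cpx \<phi> X) = rk X"
  "idm (tensor_cpx \<phi> X) i = map_mat \<phi> (idm X i)"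
  "dif (tensor_cpx \<phi> X) i = map_mat \<phi> (dif X i)"
  unfolding tensor_cpx_def by simp_all

lemma tensor_cpx_left_inverse:
  assumes "\<And>a. \<psi> (\<phi> a) = a"
  shows "tensor_cpx \<psi> (tensor_cpx \<phi> X) = X"
proof -
  have "map_mat \<psi> (map_mat \<phi> A) = A" for A
    by (intro eq_matI) (simp_all add: assms)
  then show ?thesis
    by (simp add: tensor_cpx_def)
qed

context ring_hom
begin

lemma mat_hom_add:
  "A \<in> carrier_mat nr nc \<Longrightarrow> B \<in> carrier_mat nr nc \<Longrightarrow> mat\<^sub>h (A + B) = mat\<^sub>h A + mat\<^sub>h B"
  by (intro eq_matI) (simp_all add: hom_add)

lemma mat_hom_minus:
  "A \<in> carrier_mat nr nc \<Longrightarrow> B \<in> carrier_mat nr nc \<Longrightarrow> mat\<^sub>h (A - B) = mat\<^sub>h A - mat\<^sub>h B"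
  by (intro eq_matI) (simp_all add: hom_minus)

lemma mat_hom_zero: "mat\<^sub>h (0\<^sub>m nr nc) = 0\<^sub>m nr nc"
  by (intro eq_matI) simp_all

lemma is_hom_mat_hom:
  assumes e: "e \<in> carrier_mat n n" and f: "f \<in> carrier_mat m m" and g: "is_hom e f g"
  shows "is_hom (mat\<^sub>h e) (mat\<^sub>h f) (mat\<^sub>h g)"
proof -
  have gc: "g \<in> carrier_mat m n" and fge: "f * g * e = g"
    using g e f unfolding is_hom_def by auto
  have "mat\<^sub>h f * mat\<^sub>h g * mat\<^sub>h e = mat\<^sub>h (f * g * e)"
    unfolding mat_hom_mult[OF mult_carrier_mat[OF f gc] e] mat_hom_mult[OF f gc] ..
  then show ?thesis
    using e gc f fge unfolding is_hom_def by simp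
qed

lemma is_cpx_tensor:
  assumes X: "is_cpx X"
  shows "is_cpx (tensor_cpx hom X)"
  unfolding is_cpx_def tensor_cpx_simps
proof (intro conjI allI)
  fix i
  note e = is_cpx_idm_carrier[OF X] and d = is_cpx_dif_carrier[OF X]
  show "mat\<^sub>h (idm X i) \<in> carrier_mat (rk X i) (rk X i)"
    using e by simp
  show "mat\<^sub>h (idm X i) * mat\<^sub>h (idm X i) = mat\<^sub>h (idm X i)"
    using is_cpx_idempotent[OF X, of i] unfolding idempotent_mat_def by (metis mat_hom_mult)
  show "is_hom (mat\<^sub>h (idm X i)) (mat\<^sub>h (idm X (i+1))) (mat\<^sub>h (dif X i))"
    using is_hom_mat_hom[OF e e is_cpx_dif_hom[OF X]] .
  have "dif X (i+1) \<in> carrier_mat (rk X (i+1+1)) (rk X (i+1))"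
    using d .
  then show "mat\<^sub>h (dif X (i+1)) * mat\<^sub>h (dif X i) = 0\<^sub>m (rk X (i+2)) (rk X i)"
    using is_cpx_dif_dif[OF X, of i] d[of i] mat_hom_mult[symmetric] mat_hom_zero
    by (metis add.assoc one_add_one)
next
  show "\<exists>N. \<forall>i. N < \<bar>i\<bar> \<longrightarrow> rk X i = 0"
    using X unfolding is_cpx_def by blast
qed

lemma chain_map_tensor:
  assumes X: "is_cpx X" and Y: "is_cpx Y" and f: "chain_map X Y f"
  shows "chain_map (tensor_cpx hom X) (tensor_cpx hom Y) (\<lambda>i. mat\<^sub>h (f i))"
  unfolding chain_map_def tensor_cpx_simps
proof (intro conjI allI)
  fix i
  have fc: "f j \<in> carrier_mat (rk Y j) (rk X j)" for j
    by (rule chain_map_carrier[OF X Y f])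
  show "is_hom (mat\<^sub>h (idm X i)) (mat\<^sub>h (idm Y i)) (mat\<^sub>h (f i))"
    using f is_hom_mat_hom[OF is_cpx_idm_carrier[OF X] is_cpx_idm_carrier[OF Y]]
    unfolding chain_map_def by blast
  have "mat\<^sub>h (f (i+1)) * mat\<^sub>h (dif X i) = mat\<^sub>h (f (i+1) * dif X i)"
    using fc is_cpx_dif_carrier[OF X] by (metis mat_hom_mult)
  also have "\<dots> = mat\<^sub>h (dif Y i * f i)"
    using f unfolding chain_map_def by simp
  also have "\<dots> = mat\<^sub>h (dif Y i) * mat\<^sub>h (f i)"
    using fc is_cpx_dif_carrier[OF Y] by (metis mat_hom_mult)
  finally show "mat\<^sub>h (f (i+1)) * mat\<^sub>h (dif X i) = mat\<^sub>h (dif Y i) * mat\<^sub>h (f i)" .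
qed

lemma null_homotopic_tensor:
  assumes X: "is_cpx X" and Y: "is_cpx Y" and f: "null_homotopic X Y f"
  shows "null_homotopic (tensor_cpx hom X) (tensor_cpx hom Y) (\<lambda>i. mat\<^sub>h (f i))"
proof -
  obtain h where h: "\<And>i. is_hom (idm X i) (idm Y (i-1)) (h i)"
    and fh: "\<And>i. f i = dif Y (i-1) * h i + h (i+1) * dif X i"
    using f unfolding null_homotopic_def by blast
  show ?thesis
    unfolding null_homotopic_def tensor_cpx_simps
  proof (intro exI[of _ "\<lambda>i. mat\<^sub>h (h i)"] conjI allI)
    fix i
    show "is_hom (mat\<^sub>h (idm X i)) (mat\<^sub>h (idm Y (i-1))) (mat\<^sub>h (h i))"
      by (rule is_hom_mat_hom[OF is_cpx_idm_carrier[OF X] is_cpx_idm_carrier[OF Y] h])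
    have hi: "h i \<in> carrier_mat (rk Y (i-1)) (rk X i)"
      and hi1: "h (i+1) \<in> carrier_mat (rk Y i) (rk X (i+1))"
      using is_cpx_hom_carrier[OF X Y h[of i]] is_cpx_hom_carrier[OF X Y h[of "i+1"]] by simp_all
    have dX: "dif X i \<in> carrier_mat (rk X (i+1)) (rk X i)"
      and dY: "dif Y (i-1) \<in> carrier_mat (rk Y i) (rk Y (i-1))"
      using is_cpx_dif_carrier[OF X, of i] is_cpx_dif_carrier[OF Y, of "i-1"] by simp_all
    show "mat\<^sub>h (f i) = mat\<^sub>h (dif Y (i-1)) * mat\<^sub>h (h i) + mat\<^sub>h (h (i+1)) * mat\<^sub>h (dif X i)"
      unfolding fh[of i] mat_hom_add[OF mult_carrier_mat[OF dY hi] mult_carrier_mat[OF hi1 dX]]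
        mat_hom_mult[OF dY hi] mat_hom_mult[OF hi1 dX] ..
  qed
qed

lemma contractible_tensor:
  "is_cpx X \<Longrightarrow> contractible X \<Longrightarrow> contractible (tensor_cpx hom X)"
  using null_homotopic_tensor unfolding contractible_def cpx_id_def tensor_cpx_simps by blast

lemma mat_hom_comp_minus_id:
  assumes X: "is_cpx X" and Y: "is_cpx Y" and f: "chain_map X Y f" and g: "chain_map Y X g"
  shows "mat\<^sub>h (diff_map (comp_map g f) (cpx_id X) i)
    = diff_map (comp_map (\<lambda>i. mat\<^sub>h (g i)) (\<lambda>i. mat\<^sub>h (f i))) (cpx_id (tensor_cpx hom X)) i"
proof -
  have fi: "f i \<in> carrier_mat (rk Y i) (rk X i)" and gi: "g i \<in> carrier_mat (rk X i) (rk Y i)"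
    using chain_map_carrier X Y f g by blast+
  show ?thesis
    unfolding diff_map_def comp_map_def cpx_id_def tensor_cpx_simps
    using mat_hom_minus[OF mult_carrier_mat[OF gi fi] is_cpx_idm_carrier[OF X]] mat_hom_mult[OF gi fi]
    by simp
qed

lemma htpy_equiv_tensor:
  assumes X: "is_cpx X" and Y: "is_cpx Y" and XY: "htpy_equiv X Y"
  shows "htpy_equiv (tensor_cpx hom X) (tensor_cpx hom Y)"
proof -
  obtain f g where f: "chain_map X Y f" and g: "chain_map Y X g"
    and gf: "null_homotopic X X (diff_map (comp_map g f) (cpx_id X))"
    and fg: "null_homotopic Y Y (diff_map (comp_map f g) (cpx_id Y))"
    using XY unfolding htpy_equiv_def by blast
  show ?thesis
    unfolding htpy_equiv_def
    using chain_map_tensor[OF X Y f] chain_map_tensor[OF Y X g]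
      null_homotopic_tensor[OF X X gf] null_homotopic_tensor[OF Y Y fg]
    unfolding mat_hom_comp_minus_id[OF X Y f g] mat_hom_comp_minus_id[OF Y X g f]
    by blast
qed

lemma tensor_cpx_dsum:
  assumes Y: "is_cpx Y" and Z: "is_cpx Z"
  shows "tensor_cpx hom (dsum Y Z) = dsum (tensor_cpx hom Y) (tensor_cpx hom Z)"
proof -
  note eY = is_cpx_idm_carrier[OF Y] and eZ = is_cpx_idm_carrier[OF Z]
    and dY = is_cpx_dif_carrier[OF Y] and dZ = is_cpx_dif_carrier[OF Z]
  show ?thesis
    unfolding tensor_cpx_def dsum_def
    by (simp add: map_four_block_mat[OF eY zero_carrier_mat zero_carrier_mat eZ]
        map_four_block_mat[OF dY zero_carrier_mat zero_carrier_mat dZ] mat_hom_zero)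
qed

lemma mat_hom_inv_into: "surj hom \<Longrightarrow> mat\<^sub>h (map_mat (inv_into UNIV hom) A) = A"
  by (intro eq_matI) (simp_all add: surj_f_inv_f)

lemma contractible_tensor_liftE:
  assumes "surj hom" and X: "is_cpx X" and c: "contractible (tensor_cpx hom X)"
  obtains u where "null_homotopic X X u" and "\<And>i. mat\<^sub>h (u i) = mat\<^sub>h (idm X i)"
proof -
  obtain k where k: "\<And>i. is_hom (mat\<^sub>h (idm X i)) (mat\<^sub>h (idm X (i-1))) (k i)"
    and idm_k: "\<And>i. mat\<^sub>h (idm X i) = mat\<^sub>h (dif X (i-1)) * k i + k (i+1) * mat\<^sub>h (dif X i)"
    using c unfolding contractible_def null_homotopic_def cpx_id_def tensor_cpx_simps by blast
  define h where "h i = idm X (i-1) * map_mat (inv_into UNIV hom) (k i) * idm X i" for i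
  note e = is_cpx_idm_carrier[OF X]
  have kc: "k i \<in> carrier_mat (rk X (i-1)) (rk X i)" for i
    using is_cpx_hom_carrier[OF is_cpx_tensor[OF X] is_cpx_tensor[OF X]] k by simp
  have h: "is_hom (idm X i) (idm X (i-1)) (h i)" for i
    unfolding h_def using kc[of i]
    by (intro is_hom_sandwich[OF is_cpx_idempotent[OF X] is_cpx_idempotent[OF X]]) simp
  have hom_h: "mat\<^sub>h (h i) = k i" for i
  proof -
    let ?k' = "map_mat (inv_into UNIV hom) (k i)"
    have k': "?k' \<in> carrier_mat (rk X (i-1)) (rk X i)"
      using kc[of i] by simp
    have "mat\<^sub>h (h i) = mat\<^sub>h (idm X (i-1)) * k i * mat\<^sub>h (idm X i)"
      unfolding h_def mat_hom_mult[OF mult_carrier_mat[OF e k'] e] mat_hom_mult[OF e k']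
        mat_hom_inv_into[OF assms(1)] ..
    also have "\<dots> = k i"
      using k[of i] unfolding is_hom_def by simp
    finally show ?thesis .
  qed
  define u where "u i = dif X (i-1) * h i + h (i+1) * dif X i" for i
  have "null_homotopic X X u"
    unfolding null_homotopic_def u_def using h by blast
  moreover have "mat\<^sub>h (u i) = mat\<^sub>h (idm X i)" for i
  proof -
    have hi: "h i \<in> carrier_mat (rk X (i-1)) (rk X i)"
      and hi1: "h (i+1) \<in> carrier_mat (rk X i) (rk X (i+1))"
      using is_cpx_hom_carrier[OF X X h[of i]] is_cpx_hom_carrier[OF X X h[of "i+1"]] by simp_all
    have dX: "dif X i \<in> carrier_mat (rk X (i+1)) (rk X i)"
      and dX': "dif X (i-1) \<in> carrier_mat (rk X i) (rk X (i-1))"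
      using is_cpx_dif_carrier[OF X, of i] is_cpx_dif_carrier[OF X, of "i-1"] by simp_all
    show ?thesis
      unfolding u_def idm_k[of i] mat_hom_add[OF mult_carrier_mat[OF dX' hi] mult_carrier_mat[OF hi1 dX]]
        mat_hom_mult[OF dX' hi] mat_hom_mult[OF hi1 dX] hom_h ..
  qed
  ultimately show ?thesis
    using that by blast
qed

lemma contractible_of_contractible_tensor:
  assumes "surj hom" and nil: "nilpotent_ideal {x. hom x = 0}"
    and X: "is_cpx X" and c: "contractible (tensor_cpx hom X)"
  shows "contractible X"
proof -
  obtain u where u: "null_homotopic X X u" and hom_u: "\<And>i. mat\<^sub>h (u i) = mat\<^sub>h (idm X i)"
    using contractible_tensor_liftE[OF assms(1) X c] by blast
  let ?f = "diff_map (cpx_id X) u"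
  have uc: "u i \<in> carrier_mat (rk X i) (rk X i)" for i
    using chain_map_carrier[OF X X null_homotopic_chain_map[OF X X u]] .
  note e = is_cpx_idm_carrier[OF X]
  have "chain_map X X ?f"
    using chain_map_diff[OF X X chain_map_id[OF X] null_homotopic_chain_map[OF X X u]] .
  moreover have "elements_mat (?f i) \<subseteq> {x. hom x = 0}" for i
  proof -
    have "mat\<^sub>h (?f i) = 0\<^sub>m (rk X i) (rk X i)"
      unfolding diff_map_def cpx_id_def mat_hom_minus[OF e uc] hom_u using e by simp
    then have "hom ` elements_mat (?f i) \<subseteq> {0}"
      by (metis elements_0_mat elements_mat_map)
    then show ?thesis by blast
  qed
  moreover have "diff_map (cpx_id X) ?f = u"
  proof
    fix i
    show "diff_map (cpx_id X) ?f i = u i"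
      unfolding diff_map_def cpx_id_def using e uc by (intro eq_matI) auto
  qed
  ultimately show ?thesis
    using contractible_if_id_homotopic_to_nilpotent[OF X nil] u by metis
qed

end

lemma alg_hom_ring_hom:
  assumes "alg_hom s t f"
  shows "Ring_Hom.ring_hom f"
proof -
  have add: "f (x + y) = f x + f y" and mult: "f (x * y) = f x * f y" and one: "f 1 = 1" for x y
    using assms unfolding alg_hom_def by blast+
  have "f 0 + f 0 = f 0 + 0"
    using add[of 0 0] by simp
  then have "f 0 = 0"
    by (rule add_left_imp_eq)
  then show ?thesis
    by unfold_locales (simp_all add: add mult one)
qed

theorem mainTheorem3:
  fixes sA :: "'k::field \<Rightarrow> 'a::ring_1 \<Rightarrow> 'a"
    and sL :: "'k \<Rightarrow> 'b::ring_1 \<Rightarrow> 'b"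
    and \<pi> :: "'b \<Rightarrow> 'a" and \<iota> :: "'a \<Rightarrow> 'b"
    and X :: "'a cpx"
  assumes "fd_algebra sA" and "fd_algebra sL"
    and "split_by_nilpotent sA sL \<pi> \<iota>"
    and "is_cpx X" and "indecomposable X"
  shows "indecomposable (tensor_cpx \<iota> X)"
proof -
  interpret proj: ring_hom \<pi>
    using assms(3) alg_hom_ring_hom unfolding split_by_nilpotent_def by blast
  interpret incl: ring_hom \<iota>
    using assms(3) alg_hom_ring_hom unfolding split_by_nilpotent_def by blast
  have surj: "surj \<pi>" and nil: "nilpotent_ideal {x. \<pi> x = 0}"
    and X_back: "tensor_cpx \<pi> (tensor_cpx \<iota> X) = X"
    using assms(3) tensor_cpx_left_inverse unfolding split_by_nilpotent_def by auto
  have T: "is_cpx (tensor_cpx \<iota> X)"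
    by (rule incl.is_cpx_tensor[OF assms(4)])
  show ?thesis
    unfolding indecomposable_def
  proof (intro conjI allI impI)
    show "\<not> contractible (tensor_cpx \<iota> X)"
      using proj.contractible_tensor[OF T] X_back assms(5) unfolding indecomposable_def by metis
  next
    fix Y Z assume Y: "is_cpx Y" and Z: "is_cpx Z" and "htpy_equiv (tensor_cpx \<iota> X) (dsum Y Z)"
    then have "htpy_equiv X (dsum (tensor_cpx \<pi> Y) (tensor_cpx \<pi> Z))"
      using proj.htpy_equiv_tensor[OF T is_cpx_dsum[OF Y Z]] X_back proj.tensor_cpx_dsum[OF Y Z] by simp
    then have "contractible (tensor_cpx \<pi> Y) \<or> contractible (tensor_cpx \<pi> Z)"
      using assms(5) proj.is_cpx_tensor Y Z unfolding indecomposable_def by blast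
    then show "contractible Y \<or> contractible Z"
      using proj.contractible_of_contractible_tensor[OF surj nil] Y Z by blast
  qed
qed

end
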